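(* Let $n$ be an odd positive integer, fix $\epsilon$ with $0<\epsilon<\frac12$, and let the parameter space be $\Theta^*=\{(\theta,\gamma_1,\dots,\gamma_n):\theta\in\{0,1\},\ \gamma_i\ge\frac12+\epsilon\ \forall i\}$ (with $\gamma_i\le 1$). Conditionally on $(\theta,\boldsymbol\gamma)\in\Theta^*$, let $Y_1,\dots,Y_n\in\{0,1\}$ be independent with $\mathbb{P}(Y_i=1\mid\theta=1,\boldsymbol\gamma)=\mathbb{P}(Y_i=0\mid\theta=0,\boldsymbol\gamma)=\gamma_i$, and let $U\sim\mathrm{Bernoulli}(1/2)$ be independent of $\vec Y$. Decision rules are functions $\delta:\{0,1\}^n\times\{0,1\}\to\{0,1\}$ with loss $L(\theta,a)=\mathbb{I}(\theta\ne a)$ and risk $R(\delta,\xi)=\mathbb{E}[L(\theta,\delta(\vec Y,U))\mid\xi]$ for $\xi=(\theta,\boldsymbol\gamma)$. Then the majority rule $\delta_M$, defined by $\delta_M(\vec y,u)=1$ if $\bar y>\frac12$ and $\delta_M(\vec y,u)=0$ otherwise (where $\bar y=\frac1n\sum_iy_i$), is minimax on $\Theta^*$: $\sup_{\xi\in\Theta^*}R(\delta_M,\xi)=\inf_\delta\sup_{\xi\in\Theta^*}R(\delta,\xi)$.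
   Context: Since $n$ is odd, $\bar y=\frac12$ cannot occur. *)

theory Defs
  imports Complex_Main
begin

text \<open>Binary values {0,1} are encoded as bool (True = 1, False = 0).
  Observations y in {0,1}^n are bool lists of length n; gamma is a real list of length n.\<close>

definition obs_space :: "nat \<Rightarrow> bool list set" where
  "obs_space n = {ys. length ys = n}"

definition prob_Y :: "bool \<Rightarrow> real list \<Rightarrow> bool list \<Rightarrow> real" where
  "prob_Y \<theta> \<gamma> ys = (\<Prod>i<length ys. if ys ! i = \<theta> then \<gamma> ! i else 1 - \<gamma> ! i)"

definition loss :: "bool \<Rightarrow> bool \<Rightarrow> real" where
  "loss \<theta> a = (if \<theta> \<noteq> a then 1 else 0)"

definition risk :: "nat \<Rightarrow> (bool list \<Rightarrow> bool \<Rightarrow> bool) \<Rightarrow> bool \<times> real list \<Rightarrow> real" where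
  "risk n \<delta> \<xi> = (\<Sum>ys\<in>obs_space n. \<Sum>u\<in>(UNIV::bool set).
       (1/2) * prob_Y (fst \<xi>) (snd \<xi>) ys * loss (fst \<xi>) (\<delta> ys u))"

definition Theta_star :: "nat \<Rightarrow> real \<Rightarrow> (bool \<times> real list) set" where
  "Theta_star n \<epsilon> = {(\<theta>, \<gamma>). length \<gamma> = n \<and>
       (\<forall>i<n. 1/2 + \<epsilon> \<le> \<gamma> ! i \<and> \<gamma> ! i \<le> 1)}"

definition ybar :: "bool list \<Rightarrow> real" where
  "ybar ys = (\<Sum>i<length ys. if ys ! i then 1 else 0) / real (length ys)"

definition majority_rule :: "bool list \<Rightarrow> bool \<Rightarrow> bool" where
  "majority_rule ys u = (ybar ys > 1/2)"

end

theory Submission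
  imports Defs
begin

text \<open>The majority rule errs exactly when at most \<open>n div 2\<close> voters are correct, a Poisson-binomial
  probability that decreases in every competence \<open>\<gamma>\<^sub>i\<close>; hence its worst case is
  \<open>\<gamma> = (1/2 + \<epsilon>, \<dots>, 1/2 + \<epsilon>)\<close>. At these equal competences the likelihood of \<open>\<theta>\<close> increases
  with the number of votes for \<open>\<theta>\<close>, so the majority rule is the Bayes rule for the uniform prior
  on \<open>\<theta>\<close>. Every rule therefore has average risk, and so worst-case risk, at least that of the
  majority rule there.\<close>

lemma finite_obs_space: "finite (obs_space n)"
proof -
  have "obs_space n = {xs. set xs \<subseteq> (UNIV::bool set) \<and> length xs = n}"
    unfolding obs_space_def by auto
  then show ?thesis using finite_lists_length_eq[of "UNIV::bool set" n] by simp
qed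

lemma obs_space_0: "obs_space 0 = {[]}"
  unfolding obs_space_def by auto

lemma obs_space_Suc: "obs_space (Suc n) = Cons True ` obs_space n \<union> Cons False ` obs_space n"
  unfolding obs_space_def
proof (intro set_eqI iffI)
  fix xs :: "bool list" assume "xs \<in> {ys. length ys = Suc n}"
  then show "xs \<in> Cons True ` {ys. length ys = n} \<union> Cons False ` {ys. length ys = n}"
    by (cases xs) auto
qed auto

lemma sum_obs_space_Suc:
  "(\<Sum>ys\<in>obs_space (Suc n). f ys) = (\<Sum>ys\<in>obs_space n. f (True # ys) + f (False # ys))"
proof -
  have "(\<Sum>ys\<in>obs_space (Suc n). f ys) =
        (\<Sum>ys\<in>Cons True ` obs_space n. f ys) + (\<Sum>ys\<in>Cons False ` obs_space n. f ys)"
    unfolding obs_space_Suc by (rule sum.union_disjoint) (auto simp: finite_obs_space)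
  also have "\<dots> = (\<Sum>ys\<in>obs_space n. f (True # ys)) + (\<Sum>ys\<in>obs_space n. f (False # ys))"
    by (simp add: sum.reindex)
  finally show ?thesis by (simp add: sum.distrib)
qed

lemma sum_UNIV_bool: "(\<Sum>u\<in>(UNIV::bool set). f u) = f True + f False"
  by (simp add: UNIV_bool add.commute)

lemma count_list_True_add_False: "count_list ys True + count_list ys False = length ys"
  using sum_count_set[of ys "UNIV::bool set"] by (simp add: sum_UNIV_bool)

lemma prob_Y_Nil [simp]: "prob_Y \<theta> \<gamma> [] = 1"
  unfolding prob_Y_def by simp

lemma prob_Y_Cons [simp]:
  "prob_Y \<theta> (g # \<gamma>) (y # ys) = (if y = \<theta> then g else 1 - g) * prob_Y \<theta> \<gamma> ys"
  unfolding prob_Y_def by (simp only: length_Cons prod.lessThan_Suc_shift nth_Cons_0 nth_Cons_Suc)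

lemma prob_Y_nonneg:
  assumes "length \<gamma> = length ys" "\<forall>g\<in>set \<gamma>. 0 \<le> g \<and> g \<le> 1"
  shows "0 \<le> prob_Y \<theta> \<gamma> ys"
  unfolding prob_Y_def using assms by (intro prod_nonneg) (auto simp: nth_mem)

lemma sum_prob_Y: "(\<Sum>ys\<in>obs_space (length \<gamma>). prob_Y \<theta> \<gamma> ys) = 1"
proof (induction \<gamma>)
  case Nil
  then show ?case by (simp add: obs_space_0)
next
  case (Cons g \<gamma>)
  have "prob_Y \<theta> (g # \<gamma>) (True # ys) + prob_Y \<theta> (g # \<gamma>) (False # ys) = prob_Y \<theta> \<gamma> ys" for ys
    by (cases \<theta>) (simp_all add: algebra_simps)
  then show ?case by (simp add: sum_obs_space_Suc Cons.IH)
qed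

lemma prob_Y_replicate:
  "prob_Y \<theta> (replicate (length ys) g) ys
     = g ^ count_list ys \<theta> * (1 - g) ^ (length ys - count_list ys \<theta>)"
proof (induction ys)
  case Nil
  then show ?case by simp
next
  case (Cons y ys)
  have "count_list ys \<theta> \<le> length ys" by (rule count_le_length)
  then show ?case using Cons by (auto simp: Suc_diff_le)
qed

fun poisson_binomial_cdf :: "real list \<Rightarrow> int \<Rightarrow> real" where
  "poisson_binomial_cdf [] k = of_bool (0 \<le> k)"
| "poisson_binomial_cdf (g # \<gamma>) k
     = g * poisson_binomial_cdf \<gamma> (k - 1) + (1 - g) * poisson_binomial_cdf \<gamma> k"

lemma sum_prob_Y_count_list_le:
  "(\<Sum>ys\<in>obs_space (length \<gamma>). prob_Y \<theta> \<gamma> ys * of_bool (int (count_list ys \<theta>) \<le> k))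
     = poisson_binomial_cdf \<gamma> k"
proof (induction \<gamma> arbitrary: k)
  case Nil
  then show ?case by (simp add: obs_space_0)
next
  case (Cons g \<gamma>)
  have "prob_Y \<theta> (g # \<gamma>) (True # ys) * of_bool (int (count_list (True # ys) \<theta>) \<le> k)
      + prob_Y \<theta> (g # \<gamma>) (False # ys) * of_bool (int (count_list (False # ys) \<theta>) \<le> k)
      = g * (prob_Y \<theta> \<gamma> ys * of_bool (int (count_list ys \<theta>) \<le> k - 1))
        + (1 - g) * (prob_Y \<theta> \<gamma> ys * of_bool (int (count_list ys \<theta>) \<le> k))" for ys
    by (cases \<theta>) (auto simp: algebra_simps)
  then show ?case
    by (simp only: length_Cons sum_obs_space_Suc sum.distrib sum_distrib_left[symmetric]
        Cons.IH poisson_binomial_cdf.simps)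
qed

lemma poisson_binomial_cdf_mono:
  assumes "\<forall>g\<in>set \<gamma>. 0 \<le> g \<and> g \<le> 1" "k \<le> k'"
  shows "poisson_binomial_cdf \<gamma> k \<le> poisson_binomial_cdf \<gamma> k'"
  using assms
proof (induction \<gamma> arbitrary: k k')
  case (Cons g \<gamma>)
  have "poisson_binomial_cdf \<gamma> (k - 1) \<le> poisson_binomial_cdf \<gamma> (k' - 1)"
       "poisson_binomial_cdf \<gamma> k \<le> poisson_binomial_cdf \<gamma> k'"
    using Cons by auto
  with Cons.prems show ?case by (simp add: add_mono mult_left_mono)
qed simp

text \<open>Raising a success probability moves mass from the event \<open>\<le> k\<close> to \<open>\<le> k - 1\<close>, which is
  smaller by monotonicity in \<open>k\<close>.\<close>

lemma poisson_binomial_cdf_antimono: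
  assumes "list_all2 (\<le>) \<gamma>' \<gamma>" "\<forall>g\<in>set \<gamma>'. 0 \<le> g \<and> g \<le> 1" "\<forall>g\<in>set \<gamma>. 0 \<le> g \<and> g \<le> 1"
  shows "poisson_binomial_cdf \<gamma> k \<le> poisson_binomial_cdf \<gamma>' k"
  using assms
proof (induction arbitrary: k rule: list_all2_induct)
  case (Cons g' \<gamma>' g \<gamma>)
  define a where "a = poisson_binomial_cdf \<gamma> (k - 1)"
  define b where "b = poisson_binomial_cdf \<gamma> k"
  define a' where "a' = poisson_binomial_cdf \<gamma>' (k - 1)"
  define b' where "b' = poisson_binomial_cdf \<gamma>' k"
  have IH: "a \<le> a'" "b \<le> b'" using Cons unfolding a_def b_def a'_def b'_def by auto
  have "a' \<le> b'" unfolding a'_def b'_def using Cons.prems by (intro poisson_binomial_cdf_mono) auto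
  have g: "0 \<le> g" "g \<le> 1" "g' \<le> g" using Cons by auto
  have "g * a + (1 - g) * b \<le> g * a' + (1 - g) * b'"
    using IH g by (simp add: add_mono mult_left_mono)
  also have "\<dots> \<le> g' * a' + (1 - g') * b'"
  proof -
    have "0 \<le> (g - g') * (b' - a')" using g \<open>a' \<le> b'\<close> by simp
    then show ?thesis by (simp add: algebra_simps)
  qed
  finally show ?case unfolding a_def b_def a'_def b'_def by simp
qed simp

lemma majority_rule_iff:
  assumes "odd n" "length ys = n"
  shows "majority_rule ys u \<longleftrightarrow> n div 2 < count_list ys True"
proof -
  have "(\<Sum>i<length ys. if ys ! i then 1 else 0) = real (count_list ys True)"
    by (induction ys) (simp_all add: sum.lessThan_Suc_shift del: sum.lessThan_Suc)
  moreover have "0 < n" using assms(1) by (cases n) auto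
  ultimately have "majority_rule ys u \<longleftrightarrow> real n < 2 * real (count_list ys True)"
    using assms by (simp add: majority_rule_def ybar_def field_simps)
  also have "\<dots> \<longleftrightarrow> n < 2 * count_list ys True" by linarith
  also have "\<dots> \<longleftrightarrow> n div 2 < count_list ys True" using assms(1) by presburger
  finally show ?thesis .
qed

lemma loss_majority_rule:
  assumes "odd n" "length ys = n"
  shows "loss \<theta> (majority_rule ys u) = of_bool (count_list ys \<theta> \<le> n div 2)"
  using majority_rule_iff[OF assms, of u] count_list_True_add_False[of ys] assms
  by (cases \<theta>) (auto simp: loss_def, presburger+)

lemma risk_majority_rule:
  assumes "odd n" "length \<gamma> = n"
  shows "risk n majority_rule (\<theta>, \<gamma>) = poisson_binomial_cdf \<gamma> (int (n div 2))"
proof -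
  have "risk n majority_rule (\<theta>, \<gamma>) = (\<Sum>ys\<in>obs_space (length \<gamma>).
      prob_Y \<theta> \<gamma> ys * of_bool (int (count_list ys \<theta>) \<le> int (n div 2)))"
    unfolding risk_def sum_UNIV_bool using assms
    by (intro sum.cong) (auto simp: obs_space_def loss_majority_rule)
  then show ?thesis by (simp only: sum_prob_Y_count_list_le)
qed

lemma risk_le_1:
  assumes "length \<gamma> = n" "\<forall>g\<in>set \<gamma>. 0 \<le> g \<and> g \<le> 1"
  shows "risk n \<delta> (\<theta>, \<gamma>) \<le> 1"
proof -
  have "risk n \<delta> (\<theta>, \<gamma>) \<le> (\<Sum>ys\<in>obs_space n. prob_Y \<theta> \<gamma> ys)"
    unfolding risk_def sum_UNIV_bool fst_conv snd_conv
  proof (intro sum_mono)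
    fix ys assume "ys \<in> obs_space n"
    then have "0 \<le> prob_Y \<theta> \<gamma> ys" using assms prob_Y_nonneg by (simp add: obs_space_def)
    then have weighted_loss_le: "prob_Y \<theta> \<gamma> ys * loss \<theta> a \<le> prob_Y \<theta> \<gamma> ys" for a
      by (cases "\<theta> = a") (simp_all add: loss_def)
    show "1/2 * prob_Y \<theta> \<gamma> ys * loss \<theta> (\<delta> ys True) + 1/2 * prob_Y \<theta> \<gamma> ys * loss \<theta> (\<delta> ys False)
        \<le> prob_Y \<theta> \<gamma> ys"
      using weighted_loss_le[of "\<delta> ys True"] weighted_loss_le[of "\<delta> ys False"] by simp
  qed
  also have "\<dots> = 1" using sum_prob_Y assms(1) by blast
  finally show ?thesis .
qed

lemma risk_True_add_risk_False:
  "risk n \<delta> (True, \<gamma>) + risk n \<delta> (False, \<gamma>)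
     = (\<Sum>ys\<in>obs_space n. \<Sum>u\<in>(UNIV::bool set). 1/2 * prob_Y (\<not> \<delta> ys u) \<gamma> ys)"
  unfolding risk_def sum.distrib[symmetric]
  by (intro sum.cong refl) (auto simp: loss_def)

lemma mult_power_le_swap:
  fixes g h :: real
  assumes "0 \<le> h" "h \<le> g" "a \<le> b"
  shows "g ^ a * h ^ b \<le> g ^ b * h ^ a"
proof -
  have "g ^ a * h ^ b = (g ^ a * h ^ a) * h ^ (b - a)"
    using assms(3) by (simp add: power_add[symmetric] mult.assoc)
  also have "\<dots> \<le> (g ^ a * h ^ a) * g ^ (b - a)"
    using assms by (intro mult_left_mono power_mono) auto
  also have "\<dots> = g ^ b * h ^ a"
    using assms(3) by (simp add: power_add[symmetric] algebra_simps)
  finally show ?thesis .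
qed

lemma prob_Y_not_majority_rule_le:
  assumes "odd n" "length ys = n" "1/2 \<le> g" "g \<le> 1"
  shows "prob_Y (\<not> majority_rule ys u) (replicate n g) ys
           \<le> prob_Y (majority_rule ys u) (replicate n g) ys"
proof -
  define c where "c = count_list ys True"
  have c_False: "count_list ys False = n - c"
    using count_list_True_add_False[of ys] assms(2) c_def by simp
  have "c \<le> n" using count_le_length[of ys True] assms(2) c_def by simp
  have prob_True: "prob_Y True (replicate n g) ys = g ^ c * (1 - g) ^ (n - c)"
    using prob_Y_replicate[of True ys g] assms(2) c_def by simp
  have prob_False: "prob_Y False (replicate n g) ys = g ^ (n - c) * (1 - g) ^ c"
    using prob_Y_replicate[of False ys g] assms(2) c_False \<open>c \<le> n\<close> by simp
  have g: "0 \<le> 1 - g" "1 - g \<le> g" using assms by auto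
  show ?thesis
  proof (cases "majority_rule ys u")
    case True
    then have "n - c \<le> c" using majority_rule_iff[OF assms(1,2), of u] assms(1) c_def by presburger
    then show ?thesis using True mult_power_le_swap[OF g] by (simp add: prob_True prob_False)
  next
    case False
    then have "c \<le> n - c" using majority_rule_iff[OF assms(1,2), of u] assms(1) c_def by presburger
    then show ?thesis using False mult_power_le_swap[OF g] by (simp add: prob_True prob_False)
  qed
qed

lemma bayes_risk_majority_rule_le:
  assumes "odd n" "1/2 \<le> g" "g \<le> 1"
  shows "risk n majority_rule (True, replicate n g) + risk n majority_rule (False, replicate n g)
     \<le> risk n \<delta> (True, replicate n g) + risk n \<delta> (False, replicate n g)"
  unfolding risk_True_add_risk_False
proof (intro sum_mono)
  fix ys u assume "ys \<in> obs_space n"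
  then have "prob_Y (\<not> majority_rule ys u) (replicate n g) ys \<le> prob_Y (\<not> a) (replicate n g) ys" for a
    using prob_Y_not_majority_rule_le[OF assms(1) _ assms(2,3)]
    by (cases "a = majority_rule ys u") (auto simp: obs_space_def)
  then show "1/2 * prob_Y (\<not> majority_rule ys u) (replicate n g) ys
      \<le> 1/2 * prob_Y (\<not> \<delta> ys u) (replicate n g) ys"
    by simp
qed

lemma Theta_star_memD:
  assumes "(\<theta>, \<gamma>) \<in> Theta_star n \<epsilon>" "0 \<le> \<epsilon>"
  shows "length \<gamma> = n" "\<forall>g\<in>set \<gamma>. 0 \<le> g \<and> g \<le> 1"
    "list_all2 (\<le>) (replicate n (1/2 + \<epsilon>)) \<gamma>"
  using assms by (fastforce simp: Theta_star_def in_set_conv_nth list_all2_conv_all_nth)+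

lemma replicate_mem_Theta_star:
  "\<epsilon> \<le> 1/2 \<Longrightarrow> (\<theta>, replicate n (1/2 + \<epsilon>)) \<in> Theta_star n \<epsilon>"
  by (simp add: Theta_star_def)

lemma bdd_above_risk_Theta_star:
  "0 \<le> \<epsilon> \<Longrightarrow> bdd_above (risk n \<delta> ` Theta_star n \<epsilon>)"
  by (rule bdd_aboveI2[where M = 1]) (auto dest: Theta_star_memD intro: risk_le_1)

lemma SUP_risk_majority_rule:
  assumes "odd n" "0 \<le> \<epsilon>" "\<epsilon> \<le> 1/2"
  shows "(SUP \<xi>\<in>Theta_star n \<epsilon>. risk n majority_rule \<xi>)
           = poisson_binomial_cdf (replicate n (1/2 + \<epsilon>)) (int (n div 2))"
proof (rule cSup_eq_maximum)
  show "poisson_binomial_cdf (replicate n (1/2 + \<epsilon>)) (int (n div 2))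
          \<in> risk n majority_rule ` Theta_star n \<epsilon>"
    using replicate_mem_Theta_star[OF assms(3), of True n] risk_majority_rule[OF assms(1)]
    by (metis image_eqI length_replicate)
next
  fix r assume "r \<in> risk n majority_rule ` Theta_star n \<epsilon>"
  then obtain \<theta> \<gamma> where mem: "(\<theta>, \<gamma>) \<in> Theta_star n \<epsilon>" and r: "r = risk n majority_rule (\<theta>, \<gamma>)"
    by auto
  have "\<forall>g\<in>set (replicate n (1/2 + \<epsilon>)). 0 \<le> g \<and> g \<le> 1" using assms by simp
  then show "r \<le> poisson_binomial_cdf (replicate n (1/2 + \<epsilon>)) (int (n div 2))"
    using r risk_majority_rule[OF assms(1)] Theta_star_memD[OF mem assms(2)]
    by (simp add: poisson_binomial_cdf_antimono)
qed

lemma risk_majority_rule_le_SUP_risk: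
  assumes "odd n" "0 \<le> \<epsilon>" "\<epsilon> \<le> 1/2"
  shows "poisson_binomial_cdf (replicate n (1/2 + \<epsilon>)) (int (n div 2))
           \<le> (SUP \<xi>\<in>Theta_star n \<epsilon>. risk n \<delta> \<xi>)"
proof -
  let ?\<gamma> = "replicate n (1/2 + \<epsilon>)"
  let ?S = "SUP \<xi>\<in>Theta_star n \<epsilon>. risk n \<delta> \<xi>"
  have le_SUP: "risk n \<delta> (\<theta>, ?\<gamma>) \<le> ?S" for \<theta>
    using replicate_mem_Theta_star[OF assms(3)] bdd_above_risk_Theta_star[OF assms(2)]
    by (rule cSUP_upper)
  have "2 * poisson_binomial_cdf ?\<gamma> (int (n div 2)) \<le> risk n \<delta> (True, ?\<gamma>) + risk n \<delta> (False, ?\<gamma>)"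
    using bayes_risk_majority_rule_le[OF assms(1), of "1/2 + \<epsilon>" \<delta>] assms
      risk_majority_rule[OF assms(1), of ?\<gamma>]
    by simp
  with le_SUP[of True] le_SUP[of False] show ?thesis by linarith
qed

theorem theorem8:
  fixes n :: nat and \<epsilon> :: real
  assumes "odd n" and "n > 0" and "0 < \<epsilon>" and "\<epsilon> < 1/2"
  shows "(SUP \<xi>\<in>Theta_star n \<epsilon>. risk n majority_rule \<xi>)
         = (INF \<delta>. SUP \<xi>\<in>Theta_star n \<epsilon>. risk n \<delta> \<xi>)"
proof -
  have \<epsilon>: "0 \<le> \<epsilon>" "\<epsilon> \<le> 1/2" using assms(3,4) by auto
  note SUP_majority = SUP_risk_majority_rule[OF assms(1) \<epsilon>]
  have "(INF \<delta>. SUP \<xi>\<in>Theta_star n \<epsilon>. risk n \<delta> \<xi>)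
          = poisson_binomial_cdf (replicate n (1/2 + \<epsilon>)) (int (n div 2))"
  proof (rule cInf_eq_minimum)
    show "poisson_binomial_cdf (replicate n (1/2 + \<epsilon>)) (int (n div 2))
            \<in> range (\<lambda>\<delta>. SUP \<xi>\<in>Theta_star n \<epsilon>. risk n \<delta> \<xi>)"
      using SUP_majority by (metis rangeI)
  qed (use risk_majority_rule_le_SUP_risk[OF assms(1) \<epsilon>] in auto)
  then show ?thesis using SUP_majority by simp
qed

end
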